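(* Fix $P>0$. For $Q\in[0,Q^{\rm CSIR}_{\max}]$ let (P1)$_Q$ denote problem (P1) with energy threshold $Q$. Let $Q_x,Q_y\in[0,Q^{\rm CSIR}_{\max}]$ and suppose $\rho^*_x$ and $\rho^*_y$ are optimal policies of (P1)$_{Q_x}$ and (P1)$_{Q_y}$, respectively. Then for every $\theta\in[0,1]$ there exists a policy $\rho_z$ with values in $[0,1]$ such that $$\mathbb{E}\big[Q^{\rm NL}_\nu(P,\rho_{z,\nu})\big]\ge \theta Q_x+(1-\theta)Q_y,\qquad \mathbb{E}\big[R_\nu(P,\rho_{z,\nu})\big]\ge \theta\,\mathbb{E}\big[R_\nu(P,\rho^*_{x,\nu})\big]+(1-\theta)\,\mathbb{E}\big[R_\nu(P,\rho^*_{y,\nu})\big].$$ (That is, (P1) satisfies the time-sharing condition.)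
   Context: Standing model: constants $a,b,P_s,T,\sigma^2>0$ are fixed and $\Omega=1/(1+e^{ab})$. Fading is modeled on a probability space carrying independent random variables $h$ (channel power gain, values in $(0,\infty)$, $\mathbb{E}[h]<\infty$) and $U$ (uniform on $[0,1]$). A fading state is $\nu=(h_\nu,U_\nu)$, distributed as $(h,U)$; $\mathbb{E}$ is expectation over the fading state. A policy is a Borel measurable function of the fading state. For a fading state with gain $h_\nu$, transmit power $p\ge0$ and power-splitting ratio $\rho\in[0,1]$: $R_\nu(p,\rho)=\ln\big(1+(1-\rho)h_\nu p/\sigma^2\big)$ (rate, in nats); $\Psi_\nu(p,\rho)=1/(1+e^{-a(\rho h_\nu p-b)})$; $Q^{\rm NL}_\nu(p,\rho)=P_sT(\Psi_\nu(p,\rho)-\Omega)/(1-\Omega)$ (harvested energy). Problem (P1) (fixed transmit power $P>0$, threshold $Q\in[0,Q^{\rm CSIR}_{\max}]$ where $Q^{\rm CSIR}_{\max}=\mathbb{E}[Q^{\rm NL}_\nu(P,1)]$): maximize $\mathbb{E}[R_\nu(P,\rho_\nu)]$ over policies $\rho$ with values in $[0,1]$ subject to $\mathbb{E}[Q^{\rm NL}_\nu(P,\rho_\nu)]\ge Q$. *)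

theory Defs
  imports "HOL-Probability.Probability"
begin

text \<open>Fading state nu = (h_nu, U_nu) :: real \<times> real.  Expectation over the fading
  state is taken on the underlying probability space M carrying h and U.\<close>

definition Omega :: "real \<Rightarrow> real \<Rightarrow> real" where
  "Omega a b = 1 / (1 + exp (a * b))"

definition rate :: "real \<Rightarrow> real \<Rightarrow> real \<Rightarrow> real \<Rightarrow> real" where
  "rate \<sigma>2 hv p \<rho> = ln (1 + (1 - \<rho>) * hv * p / \<sigma>2)"

definition Psi :: "real \<Rightarrow> real \<Rightarrow> real \<Rightarrow> real \<Rightarrow> real \<Rightarrow> real" where
  "Psi a b hv p \<rho> = 1 / (1 + exp (- a * (\<rho> * hv * p - b)))"

definition QNL :: "real \<Rightarrow> real \<Rightarrow> real \<Rightarrow> real \<Rightarrow> real \<Rightarrow> real \<Rightarrow> real \<Rightarrow> real" where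
  "QNL a b Ps T hv p \<rho> = Ps * T * (Psi a b hv p \<rho> - Omega a b) / (1 - Omega a b)"

definition fexp :: "'s measure \<Rightarrow> ('s \<Rightarrow> real) \<Rightarrow> ('s \<Rightarrow> real) \<Rightarrow> (real \<times> real \<Rightarrow> real) \<Rightarrow> real" where
  "fexp M h U f = (\<integral>\<omega>. f (h \<omega>, U \<omega>) \<partial>M)"

definition is_policy :: "(real \<times> real \<Rightarrow> real) \<Rightarrow> bool" where
  "is_policy \<rho> \<longleftrightarrow> \<rho> \<in> borel_measurable borel \<and> (\<forall>\<nu>. \<rho> \<nu> \<in> {0..1})"

definition ER :: "'s measure \<Rightarrow> ('s \<Rightarrow> real) \<Rightarrow> ('s \<Rightarrow> real) \<Rightarrow> real \<Rightarrow> real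
    \<Rightarrow> (real \<times> real \<Rightarrow> real) \<Rightarrow> real" where
  "ER M h U \<sigma>2 P \<rho> = fexp M h U (\<lambda>\<nu>. rate \<sigma>2 (fst \<nu>) P (\<rho> \<nu>))"

definition EQ :: "'s measure \<Rightarrow> ('s \<Rightarrow> real) \<Rightarrow> ('s \<Rightarrow> real) \<Rightarrow> real \<Rightarrow> real \<Rightarrow> real \<Rightarrow> real
    \<Rightarrow> real \<Rightarrow> (real \<times> real \<Rightarrow> real) \<Rightarrow> real" where
  "EQ M h U a b Ps T P \<rho> = fexp M h U (\<lambda>\<nu>. QNL a b Ps T (fst \<nu>) P (\<rho> \<nu>))"

definition Qmax_CSIR :: "'s measure \<Rightarrow> ('s \<Rightarrow> real) \<Rightarrow> ('s \<Rightarrow> real) \<Rightarrow> real \<Rightarrow> real \<Rightarrow> real \<Rightarrow> real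
    \<Rightarrow> real \<Rightarrow> real" where
  "Qmax_CSIR M h U a b Ps T P = EQ M h U a b Ps T P (\<lambda>_. 1)"

definition P1_feasible where
  "P1_feasible M h U a b Ps T P Q \<rho> \<longleftrightarrow> is_policy \<rho> \<and> EQ M h U a b Ps T P \<rho> \<ge> Q"

definition P1_optimal where
  "P1_optimal M h U a b Ps T \<sigma>2 P Q \<rho> \<longleftrightarrow> P1_feasible M h U a b Ps T P Q \<rho> \<and>
     (\<forall>\<rho>'. P1_feasible M h U a b Ps T P Q \<rho>' \<longrightarrow> ER M h U \<sigma>2 P \<rho>' \<le> ER M h U \<sigma>2 P \<rho>)"

end

theory Submission
  imports Defs
begin

text \<open>Time sharing: given the two optimal policies, run the first one while the uniform
  variable U lies in [0,\<theta>] and the second one otherwise, each fed with U rescaled back to a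
  uniform variable on [0,1]. Since U is independent of the channel gain, every expectation of
  the combined policy is the \<theta>-convex combination of the two expectations; in particular the
  energy constraint and the rate are combined linearly.\<close>

definition time_share :: "real \<Rightarrow> (real \<Rightarrow> 'a) \<Rightarrow> (real \<Rightarrow> 'a) \<Rightarrow> real \<Rightarrow> 'a" where
  "time_share \<theta> f g u = (if u \<le> \<theta> then f (u / \<theta>) else g ((u - \<theta>) / (1 - \<theta>)))"

definition time_share_state ::
    "real \<Rightarrow> ('b \<times> real \<Rightarrow> 'a) \<Rightarrow> ('b \<times> real \<Rightarrow> 'a) \<Rightarrow> 'b \<times> real \<Rightarrow> 'a" where
  "time_share_state \<theta> F G \<nu> = time_share \<theta> (\<lambda>u. F (fst \<nu>, u)) (\<lambda>u. G (fst \<nu>, u)) (snd \<nu>)"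

lemma time_share_state_comp:
  "(\<lambda>\<nu>. H (fst \<nu>) (time_share_state \<theta> F G \<nu>))
     = time_share_state \<theta> (\<lambda>\<nu>. H (fst \<nu>) (F \<nu>)) (\<lambda>\<nu>. H (fst \<nu>) (G \<nu>))"
  by (simp add: time_share_state_def time_share_def fun_eq_iff)

lemma measurable_time_share_state:
  assumes [measurable]: "F \<in> borel_measurable (borel \<Otimes>\<^sub>M borel)" "G \<in> borel_measurable (borel \<Otimes>\<^sub>M borel)"
  shows "time_share_state \<theta> F G \<in> borel_measurable (borel \<Otimes>\<^sub>M (borel :: real measure))"
  unfolding time_share_state_def[abs_def] time_share_def by measurable

lemma is_policy_imp_measurable: "is_policy \<rho> \<Longrightarrow> \<rho> \<in> borel_measurable (borel \<Otimes>\<^sub>M borel)"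
  unfolding is_policy_def by (simp add: borel_prod)

lemma is_policy_time_share_state:
  assumes "is_policy \<rho>x" "is_policy \<rho>y"
  shows "is_policy (time_share_state \<theta> \<rho>x \<rho>y)"
proof -
  have "time_share_state \<theta> \<rho>x \<rho>y \<in> borel_measurable (borel \<Otimes>\<^sub>M borel)"
    using assms by (intro measurable_time_share_state is_policy_imp_measurable)
  then show ?thesis
    using assms by (auto simp: is_policy_def time_share_state_def time_share_def borel_prod)
qed

lemma
  fixes f g :: "real \<Rightarrow> real"
  assumes \<theta>: "0 < \<theta>" "\<theta> < 1"
    and [measurable]: "f \<in> borel_measurable borel" "g \<in> borel_measurable borel"
    and int_f: "integrable lborel (\<lambda>u. indicator {0..1} u * f u)"
    and int_g: "integrable lborel (\<lambda>u. indicator {0..1} u * g u)"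
  shows integrable_time_share: "integrable lborel (\<lambda>u. indicator {0..1} u * time_share \<theta> f g u)"
    and integral_time_share: "(\<integral>u. indicator {0..1} u * time_share \<theta> f g u \<partial>lborel)
       = \<theta> * (\<integral>u. indicator {0..1} u * f u \<partial>lborel) + (1 - \<theta>) * (\<integral>u. indicator {0..1} u * g u \<partial>lborel)"
proof -
  define A where "A u = indicator {0..\<theta>} u * f (u / \<theta>)" for u :: real
  define B where "B u = indicator {\<theta><..1} u * g ((u - \<theta>) / (1 - \<theta>))" for u :: real
  have split: "(\<lambda>u. indicator {0..1} u * time_share \<theta> f g u) = (\<lambda>u. A u + B u)"
    using \<theta> by (auto simp: A_def B_def time_share_def indicator_def fun_eq_iff)
  have A_rescaled: "(\<lambda>x. A (0 + \<theta> * x)) = (\<lambda>u. indicator {0..1} u * f u)"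
    using \<theta> by (auto simp: A_def indicator_def fun_eq_iff zero_le_mult_iff)
  \<comment> \<open>the two rescaled pieces differ only at the point 0\<close>
  have B_rescaled: "AE x in lborel. B (\<theta> + (1 - \<theta>) * x) = indicator {0..1} x * g x"
    using AE_lborel_singleton[of "0::real"]
  proof eventually_elim
    case (elim x)
    have "\<theta> < \<theta> + (1 - \<theta>) * x \<longleftrightarrow> 0 < x" using \<theta> by (simp add: zero_less_mult_iff)
    moreover have "\<theta> + (1 - \<theta>) * x \<le> 1 \<longleftrightarrow> (1 - \<theta>) * x \<le> (1 - \<theta>) * 1" by argo
    moreover have "(1 - \<theta>) * x \<le> (1 - \<theta>) * 1 \<longleftrightarrow> x \<le> 1" using \<theta> by simp
    ultimately show ?case using \<theta> elim by (auto simp: B_def indicator_def)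
  qed
  have "integrable lborel A"
    using lborel_integrable_real_affine_iff[of \<theta> A 0] \<theta> A_rescaled int_f by simp
  moreover have "integrable lborel (\<lambda>x. B (\<theta> + (1 - \<theta>) * x))"
    using integrable_cong_AE[OF _ _ B_rescaled] int_g by (simp add: B_def)
  then have "integrable lborel B"
    using lborel_integrable_real_affine_iff[of "1 - \<theta>" B \<theta>] \<theta> by simp
  ultimately show "integrable lborel (\<lambda>u. indicator {0..1} u * time_share \<theta> f g u)"
    unfolding split by simp
  have "(\<integral>u. A u \<partial>lborel) = \<theta> * (\<integral>u. indicator {0..1} u * f u \<partial>lborel)"
    using lborel_integral_real_affine[of \<theta> A 0] \<theta> A_rescaled by simp
  moreover have "(\<integral>u. B u \<partial>lborel) = (1 - \<theta>) * (\<integral>u. indicator {0..1} u * g u \<partial>lborel)"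
    using lborel_integral_real_affine[of "1 - \<theta>" B \<theta>] \<theta> integral_cong_AE[OF _ _ B_rescaled]
    by (simp add: B_def)
  ultimately show "(\<integral>u. indicator {0..1} u * time_share \<theta> f g u \<partial>lborel)
       = \<theta> * (\<integral>u. indicator {0..1} u * f u \<partial>lborel) + (1 - \<theta>) * (\<integral>u. indicator {0..1} u * g u \<partial>lborel)"
    unfolding split using \<open>integrable lborel A\<close> \<open>integrable lborel B\<close> by simp
qed

lemma Psi_bounds: "0 \<le> Psi a b hv p r \<and> Psi a b hv p r \<le> 1"
  unfolding Psi_def by (simp add: add_pos_nonneg)

lemma Omega_bounds: "0 < Omega a b \<and> Omega a b < 1"
  unfolding Omega_def by (simp add: add_pos_pos)

lemma abs_QNL_le:
  assumes "Ps > 0" "T > 0"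
  shows "\<bar>QNL a b Ps T hv p r\<bar> \<le> Ps * T / (1 - Omega a b)"
proof -
  have pos: "0 < 1 - Omega a b" using Omega_bounds[of a b] by simp
  have diff: "\<bar>Psi a b hv p r - Omega a b\<bar> \<le> 1"
    using Psi_bounds[of a b hv p r] Omega_bounds[of a b] by linarith
  have "\<bar>QNL a b Ps T hv p r\<bar> = Ps * T * \<bar>Psi a b hv p r - Omega a b\<bar> / (1 - Omega a b)"
    unfolding QNL_def using assms pos by (simp add: abs_mult abs_divide)
  also have "\<dots> \<le> Ps * T * 1 / (1 - Omega a b)"
    using assms pos diff by (intro divide_right_mono mult_left_mono) auto
  finally show ?thesis by simp
qed

lemma abs_rate_le:
  assumes "hv > 0" "p > 0" "\<sigma>2 > 0" "r \<in> {0..1}"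
  shows "\<bar>rate \<sigma>2 hv p r\<bar> \<le> hv * p / \<sigma>2"
proof -
  have snr_nonneg: "0 \<le> (1 - r) * hv * p / \<sigma>2" using assms by auto
  have snr_le: "(1 - r) * hv * p / \<sigma>2 \<le> hv * p / \<sigma>2"
    using assms by (intro divide_right_mono)
      (auto simp: mult_le_cancel_right1 mult.assoc intro: mult_left_le_one_le)
  have "ln (1 + (1 - r) * hv * p / \<sigma>2) \<le> (1 - r) * hv * p / \<sigma>2"
    using ln_le_minus_one[of "1 + (1 - r) * hv * p / \<sigma>2"] snr_nonneg by simp
  with snr_nonneg snr_le show ?thesis unfolding rate_def by simp
qed

lemma measurable_QNL_policy [measurable]:
  assumes [measurable]: "\<rho> \<in> borel_measurable (borel \<Otimes>\<^sub>M borel)"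
  shows "(\<lambda>\<nu>::real \<times> real. QNL a b Ps T (fst \<nu>) P (\<rho> \<nu>)) \<in> borel_measurable (borel \<Otimes>\<^sub>M borel)"
  unfolding QNL_def Psi_def by measurable

lemma measurable_rate_policy [measurable]:
  assumes [measurable]: "\<rho> \<in> borel_measurable (borel \<Otimes>\<^sub>M borel)"
  shows "(\<lambda>\<nu>::real \<times> real. rate \<sigma>2 (fst \<nu>) P (\<rho> \<nu>)) \<in> borel_measurable (borel \<Otimes>\<^sub>M borel)"
  unfolding rate_def by measurable

locale fading_model = prob_space M for M :: "'s measure" +
  fixes h U :: "'s \<Rightarrow> real"
  assumes measurable_h [measurable]: "h \<in> borel_measurable M"
    and h_pos: "\<forall>\<omega>\<in>space M. h \<omega> > 0"
    and integrable_h: "integrable M h"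
    and U_uniform: "distributed M lborel U (indicator {0..1})"
    and indep_h_U: "prob_space.indep_var M borel h borel U"
begin

lemma measurable_U [measurable]: "U \<in> borel_measurable M"
  using distributed_measurable[OF U_uniform] by simp

lemma distr_U: "distr M borel U = density lborel (\<lambda>u. ennreal (indicator {0..1} u))"
proof -
  have "distr M borel U = distr M lborel U" by (rule distr_cong) auto
  also have "\<dots> = density lborel (indicator {0..1})"
    using U_uniform by (simp add: distributed_def)
  finally show ?thesis by (simp add: ennreal_indicator)
qed

text \<open>Fubini over the joint law of (h, U), which is a product measure by independence.\<close>
lemma
  fixes F :: "real \<times> real \<Rightarrow> real"
  assumes [measurable]: "F \<in> borel_measurable (borel \<Otimes>\<^sub>M borel)"
    and int_F: "integrable M (\<lambda>\<omega>. F (h \<omega>, U \<omega>))"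
  shows AE_integrable_fexp_section:
      "AE x in distr M borel h. integrable lborel (\<lambda>u. indicator {0..1} u * F (x, u))"
    and integrable_fexp_section:
      "integrable (distr M borel h) (\<lambda>x. \<integral>u. indicator {0..1} u * F (x, u) \<partial>lborel)"
    and fexp_eq_iterated_integral:
      "fexp M h U F = (\<integral>x. (\<integral>u. indicator {0..1} u * F (x, u) \<partial>lborel) \<partial>distr M borel h)"
proof -
  let ?Dh = "distr M borel h" and ?DU = "distr M borel U"
  interpret Dh: prob_space ?Dh by (rule prob_space_distr) simp
  interpret DU: prob_space ?DU by (rule prob_space_distr) simp
  interpret P: pair_prob_space ?Dh ?DU ..
  have joint: "?Dh \<Otimes>\<^sub>M ?DU = distr M (borel \<Otimes>\<^sub>M borel) (\<lambda>\<omega>. (h \<omega>, U \<omega>))"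
    using indep_h_U unfolding indep_var_distribution_eq by simp
  have [measurable]: "(\<lambda>\<omega>. (h \<omega>, U \<omega>)) \<in> measurable M (borel \<Otimes>\<^sub>M borel)" by measurable
  have int_pair: "integrable (?Dh \<Otimes>\<^sub>M ?DU) F"
    unfolding joint using int_F by (subst integrable_distr_eq) auto
  have integral_U: "integrable ?DU g \<longleftrightarrow> integrable lborel (\<lambda>u. indicator {0..1} u * g u)"
    "integral\<^sup>L ?DU g = (\<integral>u. indicator {0..1} u * g u \<partial>lborel)"
    if [measurable]: "g \<in> borel_measurable borel" for g :: "real \<Rightarrow> real"
    unfolding distr_U by (subst integrable_density; simp)+ (subst integral_density; simp)
  show "AE x in ?Dh. integrable lborel (\<lambda>u. indicator {0..1} u * F (x, u))"
    using P.AE_integrable_fst'[OF int_pair] by eventually_elim (simp add: integral_U)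
  show "integrable ?Dh (\<lambda>x. \<integral>u. indicator {0..1} u * F (x, u) \<partial>lborel)"
    using P.integrable_fst'[OF int_pair] by (simp add: integral_U)
  have "fexp M h U F = integral\<^sup>L (?Dh \<Otimes>\<^sub>M ?DU) F"
    unfolding joint fexp_def by (subst integral_distr) auto
  also have "\<dots> = (\<integral>x. (\<integral>u. F (x, u) \<partial>?DU) \<partial>?Dh)"
    using P.integral_fst'[OF int_pair] by simp
  finally show "fexp M h U F = (\<integral>x. (\<integral>u. indicator {0..1} u * F (x, u) \<partial>lborel) \<partial>?Dh)"
    by (simp add: integral_U)
qed

lemma fexp_time_share_state:
  fixes F G :: "real \<times> real \<Rightarrow> real"
  assumes \<theta>: "0 < \<theta>" "\<theta> < 1"
    and meas_F: "F \<in> borel_measurable (borel \<Otimes>\<^sub>M borel)"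
    and meas_G: "G \<in> borel_measurable (borel \<Otimes>\<^sub>M borel)"
    and int_F: "integrable M (\<lambda>\<omega>. F (h \<omega>, U \<omega>))" and int_G: "integrable M (\<lambda>\<omega>. G (h \<omega>, U \<omega>))"
    and int_FG: "integrable M (\<lambda>\<omega>. time_share_state \<theta> F G (h \<omega>, U \<omega>))"
  shows "fexp M h U (time_share_state \<theta> F G) = \<theta> * fexp M h U F + (1 - \<theta>) * fexp M h U G"
proof -
  have meas_FG: "time_share_state \<theta> F G \<in> borel_measurable (borel \<Otimes>\<^sub>M borel)"
    using meas_F meas_G by (rule measurable_time_share_state)
  let ?Dh = "distr M borel h" and ?I = "\<lambda>F x. \<integral>u. indicator {0..1} u * F (x, u) \<partial>lborel"
  have "AE x in ?Dh. ?I (time_share_state \<theta> F G) x = \<theta> * ?I F x + (1 - \<theta>) * ?I G x"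
    using AE_integrable_fexp_section[OF meas_F int_F] AE_integrable_fexp_section[OF meas_G int_G]
  proof eventually_elim
    case (elim x)
    have "time_share_state \<theta> F G (x, u) = time_share \<theta> (\<lambda>u. F (x, u)) (\<lambda>u. G (x, u)) u" for u
      by (simp add: time_share_state_def)
    moreover have "(\<lambda>u. F (x, u)) \<in> borel_measurable borel" "(\<lambda>u. G (x, u)) \<in> borel_measurable borel"
      using measurable_Pair2[OF meas_F] measurable_Pair2[OF meas_G] by auto
    ultimately show ?case using integral_time_share[OF \<theta> _ _ elim] by simp
  qed
  then have "(\<integral>x. ?I (time_share_state \<theta> F G) x \<partial>?Dh) = (\<integral>x. \<theta> * ?I F x + (1 - \<theta>) * ?I G x \<partial>?Dh)"
    using integrable_fexp_section[OF meas_F int_F] integrable_fexp_section[OF meas_G int_G]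
      integrable_fexp_section[OF meas_FG int_FG]
    by (intro integral_cong_AE) (auto intro: borel_measurable_integrable)
  also have "\<dots> = \<theta> * (\<integral>x. ?I F x \<partial>?Dh) + (1 - \<theta>) * (\<integral>x. ?I G x \<partial>?Dh)"
    using integrable_fexp_section[OF meas_F int_F] integrable_fexp_section[OF meas_G int_G] by simp
  finally show ?thesis
    using fexp_eq_iterated_integral[OF meas_F int_F] fexp_eq_iterated_integral[OF meas_G int_G]
      fexp_eq_iterated_integral[OF meas_FG int_FG] by simp
qed

lemma integrable_QNL_policy:
  assumes "is_policy \<rho>" "Ps > 0" "T > 0"
  shows "integrable M (\<lambda>\<omega>. QNL a b Ps T (h \<omega>) P (\<rho> (h \<omega>, U \<omega>)))"
proof -
  have [measurable]: "\<rho> \<in> borel_measurable (borel \<Otimes>\<^sub>M borel)"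
    using assms(1) by (rule is_policy_imp_measurable)
  have "(\<lambda>\<omega>. (\<lambda>\<nu>. QNL a b Ps T (fst \<nu>) P (\<rho> \<nu>)) (h \<omega>, U \<omega>)) \<in> borel_measurable M"
    by measurable
  then show ?thesis
    using abs_QNL_le[OF assms(2,3)]
    by (intro integrable_const_bound[where B="Ps * T / (1 - Omega a b)"]) auto
qed

lemma integrable_rate_policy:
  assumes "is_policy \<rho>" "P > 0" "\<sigma>2 > 0"
  shows "integrable M (\<lambda>\<omega>. rate \<sigma>2 (h \<omega>) P (\<rho> (h \<omega>, U \<omega>)))"
proof (rule Bochner_Integration.integrable_bound)
  show "integrable M (\<lambda>\<omega>. h \<omega> * P / \<sigma>2)" using integrable_h by simp
  have [measurable]: "\<rho> \<in> borel_measurable (borel \<Otimes>\<^sub>M borel)"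
    using assms(1) by (rule is_policy_imp_measurable)
  have "(\<lambda>\<omega>. (\<lambda>\<nu>. rate \<sigma>2 (fst \<nu>) P (\<rho> \<nu>)) (h \<omega>, U \<omega>)) \<in> borel_measurable M"
    by measurable
  then show "(\<lambda>\<omega>. rate \<sigma>2 (h \<omega>) P (\<rho> (h \<omega>, U \<omega>))) \<in> borel_measurable M" by simp
  show "AE \<omega> in M. norm (rate \<sigma>2 (h \<omega>) P (\<rho> (h \<omega>, U \<omega>))) \<le> norm (h \<omega> * P / \<sigma>2)"
    using abs_rate_le[of "h _" P \<sigma>2] h_pos assms by (intro AE_I2) (auto simp: is_policy_def)
qed

lemma fexp_time_share_policy:
  fixes H :: "real \<Rightarrow> real \<Rightarrow> real"
  assumes \<theta>: "0 < \<theta>" "\<theta> < 1" and policies: "is_policy \<rho>x" "is_policy \<rho>y"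
    and meas_H: "\<And>\<rho>. is_policy \<rho> \<Longrightarrow> (\<lambda>\<nu>. H (fst \<nu>) (\<rho> \<nu>)) \<in> borel_measurable (borel \<Otimes>\<^sub>M borel)"
    and int_H: "\<And>\<rho>. is_policy \<rho> \<Longrightarrow> integrable M (\<lambda>\<omega>. H (h \<omega>) (\<rho> (h \<omega>, U \<omega>)))"
  shows "fexp M h U (\<lambda>\<nu>. H (fst \<nu>) (time_share_state \<theta> \<rho>x \<rho>y \<nu>))
           = \<theta> * fexp M h U (\<lambda>\<nu>. H (fst \<nu>) (\<rho>x \<nu>)) + (1 - \<theta>) * fexp M h U (\<lambda>\<nu>. H (fst \<nu>) (\<rho>y \<nu>))"
proof -
  have "is_policy (time_share_state \<theta> \<rho>x \<rho>y)"
    using policies by (rule is_policy_time_share_state)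
  then have "integrable M (\<lambda>\<omega>. time_share_state \<theta> (\<lambda>\<nu>. H (fst \<nu>) (\<rho>x \<nu>)) (\<lambda>\<nu>. H (fst \<nu>) (\<rho>y \<nu>)) (h \<omega>, U \<omega>))"
    using int_H unfolding time_share_state_comp[symmetric] by simp
  then show ?thesis
    unfolding time_share_state_comp
    using policies int_H by (intro fexp_time_share_state \<theta> meas_H) simp_all
qed

lemma EQ_time_share_state:
  assumes "0 < \<theta>" "\<theta> < 1" "is_policy \<rho>x" "is_policy \<rho>y" "Ps > 0" "T > 0"
  shows "EQ M h U a b Ps T P (time_share_state \<theta> \<rho>x \<rho>y)
           = \<theta> * EQ M h U a b Ps T P \<rho>x + (1 - \<theta>) * EQ M h U a b Ps T P \<rho>y"
  unfolding EQ_def using assms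
  by (intro fexp_time_share_policy[where H = "\<lambda>hv. QNL a b Ps T hv P"] measurable_QNL_policy
      is_policy_imp_measurable integrable_QNL_policy)

lemma ER_time_share_state:
  assumes "0 < \<theta>" "\<theta> < 1" "is_policy \<rho>x" "is_policy \<rho>y" "P > 0" "\<sigma>2 > 0"
  shows "ER M h U \<sigma>2 P (time_share_state \<theta> \<rho>x \<rho>y)
           = \<theta> * ER M h U \<sigma>2 P \<rho>x + (1 - \<theta>) * ER M h U \<sigma>2 P \<rho>y"
  unfolding ER_def using assms
  by (intro fexp_time_share_policy[where H = "\<lambda>hv. rate \<sigma>2 hv P"] measurable_rate_policy
      is_policy_imp_measurable integrable_rate_policy)

end

theorem lemma1:
  fixes M :: "'s measure" and h U :: "'s \<Rightarrow> real"
    and a b Ps T \<sigma>2 P Qx Qy \<theta> :: real and \<rho>x \<rho>y :: "real \<times> real \<Rightarrow> real"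
  assumes "prob_space M"
    and "h \<in> borel_measurable M" and "\<forall>\<omega>\<in>space M. h \<omega> > 0" and "integrable M h"
    and "distributed M lborel U (indicator {0..1})"
    and "prob_space.indep_var M borel h borel U"
    and "a > 0" "b > 0" "Ps > 0" "T > 0" "\<sigma>2 > 0" "P > 0"
    and "Qx \<in> {0..Qmax_CSIR M h U a b Ps T P}" "Qy \<in> {0..Qmax_CSIR M h U a b Ps T P}"
    and "P1_optimal M h U a b Ps T \<sigma>2 P Qx \<rho>x"
    and "P1_optimal M h U a b Ps T \<sigma>2 P Qy \<rho>y"
    and "\<theta> \<in> {0..1}"
  shows "\<exists>\<rho>z. is_policy \<rho>z \<and>
           EQ M h U a b Ps T P \<rho>z \<ge> \<theta> * Qx + (1 - \<theta>) * Qy \<and>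
           ER M h U \<sigma>2 P \<rho>z \<ge> \<theta> * ER M h U \<sigma>2 P \<rho>x + (1 - \<theta>) * ER M h U \<sigma>2 P \<rho>y"
proof -
  interpret fading_model M h U
    using assms(1-6) by (simp add: fading_model_def fading_model_axioms_def)
  have x: "is_policy \<rho>x" "EQ M h U a b Ps T P \<rho>x \<ge> Qx"
    and y: "is_policy \<rho>y" "EQ M h U a b Ps T P \<rho>y \<ge> Qy"
    using assms(15,16) unfolding P1_optimal_def P1_feasible_def by auto
  consider "\<theta> = 0" | "\<theta> = 1" | "0 < \<theta>" "\<theta> < 1" using assms(17) by fastforce
  then show ?thesis
  proof cases
    case 3
    let ?\<rho>z = "time_share_state \<theta> \<rho>x \<rho>y"
    have "\<theta> * Qx + (1 - \<theta>) * Qy \<le> EQ M h U a b Ps T P ?\<rho>z"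
      unfolding EQ_time_share_state[OF 3 x(1) y(1) assms(9,10)]
      using x y 3 by (intro add_mono mult_left_mono) auto
    then show ?thesis
      using is_policy_time_share_state[OF x(1) y(1)] ER_time_share_state[OF 3 x(1) y(1) assms(12,11)]
      by (intro exI[of _ ?\<rho>z]) auto
  qed (use x y in \<open>auto intro: exI[of _ \<rho>x] exI[of _ \<rho>y]\<close>)
qed

end
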